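(* Let $T=\begin{pmatrix}1&1\\0&1\end{pmatrix}$. For all integers $n,m$, each of the matrices $$\begin{pmatrix}1&n\\0&1\end{pmatrix},\qquad \begin{pmatrix}-1&n\\0&-1\end{pmatrix},\qquad \begin{pmatrix}n&1-nm\\-1&m\end{pmatrix},\qquad \begin{pmatrix}n&nm-1\\1&m\end{pmatrix}$$ can be written in the form $T^{\varepsilon}[A_1,B_1][A_2,B_2]$ with $\varepsilon\in\{-1,0,1\}$ and $A_1,B_1,A_2,B_2\in\mathsf{GL}(2,\mathbb{Z})$; i.e. each is, up to at most one factor $T^{\pm1}$, a product of at most two commutators in $\mathsf{GL}(2,\mathbb{Z})$.
   Context: $[A,B]=ABA^{-1}B^{-1}$. A product of "at most two" commutators includes products where some commutator factors are trivial. *)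

theory Defs
  imports "HOL-Analysis.Analysis"
begin

text \<open>2x2 integer matrices are elements of type int^2^2 (row i, column j is A $ i $ j);
  GL(2,Z) is the set of matrices that are invertible over the integers
  (library notion invertible: two-sided inverse with integer entries).\<close>

definition mat2 :: "int \<Rightarrow> int \<Rightarrow> int \<Rightarrow> int \<Rightarrow> int^2^2" where
  "mat2 a b c d = vector [vector [a, b], vector [c, d]]"

definition commutator :: "int^2^2 \<Rightarrow> int^2^2 \<Rightarrow> int^2^2" where
  "commutator A B = A ** B ** matrix_inv A ** matrix_inv B"

definition Tmat :: "int^2^2" where
  "Tmat = mat2 1 1 0 1"

text \<open>Integer power T^e, needed only for e in {-1,0,1}.\<close>
definition Tpow :: "int \<Rightarrow> int^2^2" where
  "Tpow e = (if e = 1 then Tmat else if e = 0 then mat 1 else matrix_inv Tmat)"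

end

theory Submission
  imports Defs
begin

text \<open>Conjugation by \<open>D = diag(1,-1)\<close> inverts \<open>T\<close>, so \<open>[D, T\<^sup>-\<^sup>j] = T\<^sup>2\<^sup>j\<close>: every even power
  of \<open>T\<close> is a single commutator. Each of the four families is, up to conjugation by a power
  of \<open>T\<close> (which commutes with \<open>T\<^sup>\<epsilon>\<close> and maps commutators to commutators), of the form
  \<open>N T\<^sup>k\<close> with \<open>N \<in> {I, -I, S, S\<^sup>-\<^sup>1}\<close>, \<open>S = [0,-1;1,0]\<close>. Splitting \<open>k = r + 2j\<close> with
  \<open>r \<in> {0,1}\<close> reduces the claim to the eight matrices \<open>N\<close>, \<open>N T\<close>, and each of these is
  \<open>T\<^sup>\<epsilon>\<close> times one explicit commutator.\<close>

lemma mat2_mult: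
  "mat2 a b c d ** mat2 a' b' c' d' = mat2 (a*a' + b*c') (a*b' + b*d') (c*a' + d*c') (c*b' + d*d')"
  unfolding mat2_def matrix_matrix_mult_def by (simp add: vec_eq_iff forall_2 sum_2)

lemma mat2_eq_iff: "mat2 a b c d = mat2 a' b' c' d' \<longleftrightarrow> a = a' \<and> b = b' \<and> c = c' \<and> d = d'"
  unfolding mat2_def by (auto simp: vec_eq_iff forall_2)

lemma mat_1_eq_mat2: "mat 1 = mat2 1 0 0 1"
  unfolding mat2_def by (simp add: vec_eq_iff forall_2 mat_def)

lemma matrix_inv_unique:
  fixes A :: "'a::semiring_1^'n^'m"
  assumes "A ** B = mat 1" and "B ** A = mat 1"
  shows "matrix_inv A = B"
proof -
  have "A ** matrix_inv A = mat 1 \<and> matrix_inv A ** A = mat 1"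
    unfolding matrix_inv_def using assms by (rule someI[where x = B, OF conjI])
  then show ?thesis
    by (metis assms(1) matrix_mul_assoc matrix_mul_lid matrix_mul_rid)
qed

lemma
  fixes A :: "'a::semiring_1^'n^'m"
  assumes "invertible A"
  shows matrix_inv_right: "A ** matrix_inv A = mat 1"
    and matrix_inv_left: "matrix_inv A ** A = mat 1"
  using assms matrix_inv_unique unfolding invertible_def by blast+

lemma
  assumes "a*d - b*c = u" and "u*u = 1"
  shows invertible_mat2_unimodular: "invertible (mat2 a b c d)"
    and matrix_inv_mat2_unimodular: "matrix_inv (mat2 a b c d) = mat2 (u*d) (-u*b) (-u*c) (u*a)"
proof -
  have "u * (a*d - b*c) = 1"
    using assms by simp
  then have right: "mat2 a b c d ** mat2 (u*d) (-u*b) (-u*c) (u*a) = mat 1"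
    and left: "mat2 (u*d) (-u*b) (-u*c) (u*a) ** mat2 a b c d = mat 1"
    by (simp_all add: mat2_mult mat_1_eq_mat2 mat2_eq_iff algebra_simps)
  then show "invertible (mat2 a b c d)"
    unfolding invertible_def by blast
  show "matrix_inv (mat2 a b c d) = mat2 (u*d) (-u*b) (-u*c) (u*a)"
    using matrix_inv_unique[OF right left] .
qed

lemma invertible_mat2_det_1: "a*d - b*c = 1 \<Longrightarrow> invertible (mat2 a b c d)"
  and matrix_inv_mat2_det_1: "a*d - b*c = 1 \<Longrightarrow> matrix_inv (mat2 a b c d) = mat2 d (-b) (-c) a"
  and invertible_mat2_det_minus_1: "a*d - b*c = -1 \<Longrightarrow> invertible (mat2 a b c d)"
  and matrix_inv_mat2_det_minus_1: "a*d - b*c = -1 \<Longrightarrow> matrix_inv (mat2 a b c d) = mat2 (-d) b c (-a)"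
  using invertible_mat2_unimodular[of a d b c 1] matrix_inv_mat2_unimodular[of a d b c 1]
    invertible_mat2_unimodular[of a d b c "-1"] matrix_inv_mat2_unimodular[of a d b c "-1"]
  by simp_all

lemmas mat2_computation = mat2_mult mat2_eq_iff mat_1_eq_mat2
  invertible_mat2_det_1 matrix_inv_mat2_det_1
  invertible_mat2_det_minus_1 matrix_inv_mat2_det_minus_1

lemma matrix_mul_cancel_left:
  fixes A :: "'a::semiring_1^'n^'m"
  assumes "B ** A = mat 1"
  shows "B ** (A ** X) = X"
  by (metis assms matrix_mul_assoc matrix_mul_lid)

lemma commutator_conj:
  fixes G G' A B :: "int^2^2"
  assumes "G ** G' = mat 1" and "G' ** G = mat 1" and "invertible A" and "invertible B"
  shows "commutator (G ** A ** G') (G ** B ** G') = G ** commutator A B ** G'"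
proof -
  have inv_conj: "matrix_inv (G ** X ** G') = G ** matrix_inv X ** G'" if "invertible X" for X
    using assms(1,2) matrix_inv_right[OF that] matrix_inv_left[OF that]
    by (intro matrix_inv_unique) (simp_all add: matrix_mul_assoc[symmetric] matrix_mul_cancel_left)
  show ?thesis
    unfolding commutator_def inv_conj[OF assms(3)] inv_conj[OF assms(4)]
    using assms(2) by (simp add: matrix_mul_assoc[symmetric] matrix_mul_cancel_left)
qed

definition Tpower :: "int \<Rightarrow> int^2^2" where
  "Tpower k = mat2 1 k 0 1"

lemma Tpower_add: "Tpower a ** Tpower b = Tpower (a + b)"
  by (simp add: Tpower_def mat2_mult add.commute)

lemma Tpower_0: "Tpower 0 = mat 1"
  by (simp add: Tpower_def mat_1_eq_mat2)

lemma Tpower_commute: "Tpower a ** Tpower b = Tpower b ** Tpower a"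
  by (simp add: Tpower_add add.commute)

lemma invertible_Tpower: "invertible (Tpower k)"
  by (simp add: Tpower_def invertible_mat2_det_1)

lemma Tpow_eq_Tpower: "e \<in> {-1, 0, 1} \<Longrightarrow> Tpow e = Tpower e"
  by (auto simp: Tpow_def Tpower_def Tmat_def mat_1_eq_mat2 matrix_inv_mat2_det_1)

lemma commutator_diag_Tpower: "commutator (mat2 1 0 0 (-1)) (Tpower (-j)) = Tpower (2 * j)"
  by (simp add: commutator_def Tpower_def mat2_computation)

definition T_commutator_form :: "int^2^2 \<Rightarrow> bool" where
  "T_commutator_form M \<longleftrightarrow>
     (\<exists>e \<in> {-1, 0, 1 :: int}. \<exists>A B. invertible A \<and> invertible B \<and> M = Tpow e ** commutator A B)"

definition T_two_commutators_form :: "int^2^2 \<Rightarrow> bool" where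
  "T_two_commutators_form M \<longleftrightarrow>
     (\<exists>e \<in> {-1, 0, 1 :: int}. \<exists>A1 B1 A2 B2 :: int^2^2.
        invertible A1 \<and> invertible B1 \<and> invertible A2 \<and> invertible B2 \<and>
        M = Tpow e ** commutator A1 B1 ** commutator A2 B2)"

lemma T_two_commutators_form_mult_Tpower_even:
  assumes "T_commutator_form N"
  shows "T_two_commutators_form (N ** Tpower (2 * j))"
proof -
  obtain e A B where "e \<in> {-1, 0, 1}" "invertible A" "invertible B" "N = Tpow e ** commutator A B"
    using assms unfolding T_commutator_form_def by blast
  moreover have "invertible (mat2 1 0 0 (-1))"
    by (simp add: invertible_mat2_det_minus_1)
  ultimately show ?thesis
    unfolding T_two_commutators_form_def commutator_diag_Tpower[symmetric]
    using invertible_Tpower by blast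
qed

lemma T_two_commutators_form_mult_Tpower:
  assumes "T_commutator_form N" and "T_commutator_form (N ** Tpower 1)"
  shows "T_two_commutators_form (N ** Tpower k)"
proof -
  have "N ** Tpower k = (N ** Tpower (k mod 2)) ** Tpower (2 * (k div 2))"
    by (simp add: matrix_mul_assoc[symmetric] Tpower_add)
  moreover have "k mod 2 = 0 \<or> k mod 2 = 1"
    by presburger
  ultimately show ?thesis
    using assms T_two_commutators_form_mult_Tpower_even
    by (auto simp: Tpower_0 matrix_mul_rid)
qed

lemma T_two_commutators_form_conj_Tpower:
  assumes "T_two_commutators_form X"
  shows "T_two_commutators_form (Tpower k ** X ** Tpower (-k))"
proof -
  obtain e A1 B1 A2 B2 where e: "e \<in> {-1, 0, 1}"
    and inv: "invertible A1" "invertible B1" "invertible A2" "invertible B2"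
    and X: "X = Tpow e ** commutator A1 B1 ** commutator A2 B2"
    using assms unfolding T_two_commutators_form_def by blast
  let ?conj = "\<lambda>Y. Tpower k ** Y ** Tpower (-k)"
  have G: "Tpower k ** Tpower (-k) = mat 1" "Tpower (-k) ** Tpower k = mat 1"
    by (simp_all add: Tpower_add Tpower_0)
  have "Tpower k ** (Tpower e ** Y) = Tpower e ** (Tpower k ** Y)" for Y
    by (metis matrix_mul_assoc Tpower_commute)
  then have "?conj X = Tpow e ** commutator (?conj A1) (?conj B1) ** commutator (?conj A2) (?conj B2)"
    unfolding X commutator_conj[OF G inv(1,2)] commutator_conj[OF G inv(3,4)] Tpow_eq_Tpower[OF e]
    by (simp add: matrix_mul_assoc[symmetric] matrix_mul_cancel_left G)
  moreover have "invertible (?conj Y)" if "invertible Y" for Y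
    using that invertible_Tpower invertible_mult by blast
  ultimately show ?thesis
    unfolding T_two_commutators_form_def using e inv by blast
qed

lemma T_two_commutators_form_Tpower: "T_two_commutators_form (mat 1 ** Tpower k)"
proof (rule T_two_commutators_form_mult_Tpower)
  have "invertible (mat 1 :: int^2^2)"
    by (simp add: mat_1_eq_mat2 invertible_mat2_det_1)
  moreover have "mat 1 = Tpow 0 ** commutator (mat 1) (mat 1)"
    and "mat 1 ** Tpower 1 = Tpow 1 ** commutator (mat 1) (mat 1)"
    by (simp_all add: Tpow_eq_Tpower Tpower_def commutator_def mat2_computation)
  ultimately show "T_commutator_form (mat 1)" and "T_commutator_form (mat 1 ** Tpower 1)"
    unfolding T_commutator_form_def by blast+
qed

lemma T_two_commutators_form_neg_Tpower: "T_two_commutators_form (mat2 (-1) 0 0 (-1) ** Tpower k)"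
proof (rule T_two_commutators_form_mult_Tpower)
  let ?D = "mat2 1 0 0 (-1)" and ?S = "mat2 0 (-1) 1 0"
  have "invertible ?D" "invertible ?S"
    by (simp_all add: mat2_computation)
  moreover have "mat2 (-1) 0 0 (-1) = Tpow 0 ** commutator ?D ?S"
    and "mat2 (-1) 0 0 (-1) ** Tpower 1 = Tpow 1 ** commutator ?D ?S"
    by (simp_all add: Tpow_eq_Tpower Tpower_def commutator_def mat2_computation)
  ultimately show "T_commutator_form (mat2 (-1) 0 0 (-1))"
    and "T_commutator_form (mat2 (-1) 0 0 (-1) ** Tpower 1)"
    unfolding T_commutator_form_def by blast+
qed

lemma T_two_commutators_form_S_Tpower: "T_two_commutators_form (mat2 0 (-1) 1 0 ** Tpower k)"
proof (rule T_two_commutators_form_mult_Tpower)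
  let ?A = "mat2 (-1) (-1) 0 1" and ?B = "mat2 (-1) (-1) 1 0"
    and ?A' = "mat2 (-2) (-1) (-1) 0" and ?B' = "mat2 (-2) (-1) 1 1"
  have "invertible ?A" "invertible ?B" "invertible ?A'" "invertible ?B'"
    by (simp_all add: mat2_computation)
  moreover have "mat2 0 (-1) 1 0 = Tpow 1 ** commutator ?A ?B"
    and "mat2 0 (-1) 1 0 ** Tpower 1 = Tpow 0 ** commutator ?A' ?B'"
    by (simp_all add: Tpow_eq_Tpower Tpower_def commutator_def mat2_computation)
  ultimately show "T_commutator_form (mat2 0 (-1) 1 0)"
    and "T_commutator_form (mat2 0 (-1) 1 0 ** Tpower 1)"
    unfolding T_commutator_form_def by blast+
qed

lemma T_two_commutators_form_S_inv_Tpower: "T_two_commutators_form (mat2 0 1 (-1) 0 ** Tpower k)"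
proof (rule T_two_commutators_form_mult_Tpower)
  let ?A = "mat2 (-2) (-1) 1 0" and ?B = "mat2 (-1) (-1) (-2) (-1)"
    and ?A' = "mat2 (-1) (-1) 0 1" and ?B' = "mat2 0 (-1) (-1) 0"
  have "invertible ?A" "invertible ?B" "invertible ?A'" "invertible ?B'"
    by (simp_all add: mat2_computation)
  moreover have "mat2 0 1 (-1) 0 = Tpow 1 ** commutator ?A ?B"
    and "mat2 0 1 (-1) 0 ** Tpower 1 = Tpow 0 ** commutator ?A' ?B'"
    by (simp_all add: Tpow_eq_Tpower Tpower_def commutator_def mat2_computation)
  ultimately show "T_commutator_form (mat2 0 1 (-1) 0)"
    and "T_commutator_form (mat2 0 1 (-1) 0 ** Tpower 1)"
    unfolding T_commutator_form_def by blast+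
qed

theorem mainTheorem12:
  fixes n m :: int
  assumes "M \<in> {mat2 1 n 0 1, mat2 (-1) n 0 (-1), mat2 n (1 - n*m) (-1) m, mat2 n (n*m - 1) 1 m}"
  shows "\<exists>e \<in> {-1, 0, 1 :: int}. \<exists>A1 B1 A2 B2 :: int^2^2.
           invertible A1 \<and> invertible B1 \<and> invertible A2 \<and> invertible B2 \<and>
           M = Tpow e ** commutator A1 B1 ** commutator A2 B2"
proof -
  have "mat2 1 n 0 1 = mat 1 ** Tpower n"
    and "mat2 (-1) n 0 (-1) = mat2 (-1) 0 0 (-1) ** Tpower (-n)"
    and "mat2 n (1 - n*m) (-1) m = Tpower (-n) ** (mat2 0 1 (-1) 0 ** Tpower (- (n + m))) ** Tpower n"
    and "mat2 n (n*m - 1) 1 m = Tpower n ** (mat2 0 (-1) 1 0 ** Tpower (n + m)) ** Tpower (-n)"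
    by (simp_all add: Tpower_def mat2_mult mat_1_eq_mat2 mat2_eq_iff algebra_simps)
  then have "T_two_commutators_form M"
    using assms T_two_commutators_form_Tpower T_two_commutators_form_neg_Tpower
      T_two_commutators_form_conj_Tpower[OF T_two_commutators_form_S_Tpower]
      T_two_commutators_form_conj_Tpower[OF T_two_commutators_form_S_inv_Tpower, of "-n"]
    by auto
  then show ?thesis
    unfolding T_two_commutators_form_def .
qed

end
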